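(* Let $F:\mathbb{R}^d\to\mathbb{R}$ be any differentiable function. Suppose that for all $t\ge1$, $\mathbb{E}[g_t\mid\mathcal{F}_t]=\nabla F(x_t)$, $\|g_t\|\le G$ almost surely, and the learning rate $\eta_t$ is a non-negative $\mathcal{F}_t$-measurable random variable. Assume the regularizers $\phi_1,\phi_2,\dots$ are convex and differentiable, the minimizers defining $x_t$ exist, $\phi_1$ attains its minimum, all expectations below are finite, and for all $t\ge1$ $$H_t(x_t)-H_{t+1}(x_{t+1})+\langle\ell_t,x_t\rangle\le0 .$$ Then FTRL with rescaled gradients satisfies for all $T\ge0$ and all $u\in\mathbb{R}^d$: $$\mathbb{E}[B_{\phi_{T+1}}(u,x_{T+1})]+\sum_{t=1}^T\mathbb{E}\big[\eta_t\langle\nabla F(x_t),x_t-u\rangle\big]\le \mathbb{E}[\phi_{T+1}(u)]-\min_{x\in\mathbb{R}^d}\phi_1(x).$$ In particular $\sum_{t=1}^T\mathbb{E}[\eta_t\langle\nabla F(x_t),x_t-u\rangle]\le\mathbb{E}[\phi_{T+1}(u)]-\min_x\phi_1(x)$, and if there exists $x^*$ with $\langle\nabla F(x),x-x^*\rangle\ge0$ for all $x\in\mathbb{R}^d$, then $\mathbb{E}[B_{\phi_{T+1}}(x^*,x_{T+1})]\le\mathbb{E}[\phi_{T+1}(x^* )]-\min_x\phi_1(x)$.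
   Context: $\|\cdot\|$ is the Euclidean norm, $G>0$. Iterates $x_1,x_2,\dots$ and random vectors $g_t$ (received after $x_t$); $\mathcal{F}_t$ is the $\sigma$-algebra generated by $x_1,\dots,x_t,g_1,\dots,g_{t-1}$. For differentiable $f$, $B_f(x,y)=f(x)-f(y)-\langle\nabla f(y),x-y\rangle$. FTRL with rescaled gradients (initial point $0$): given regularizers $\phi_t:\mathbb{R}^d\to\mathbb{R}$ ($\phi_t$ and $\eta_t$ may depend on $g_1,\dots,g_{t-1}$, i.e. are $\mathcal{F}_t$-measurable), set $\theta_0=0$; for $t=1,2,\dots$: $x_t\in\arg\min_{x}H_t(x)$ where $H_t(x)=\phi_t(x)-\langle\theta_{t-1},x\rangle$; receive $g_t$; $\ell_t=\eta_tg_t$; $\theta_t=\theta_{t-1}-\ell_t$. *)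

theory Defs
  imports "HOL-Analysis.Analysis" "HOL-Probability.Probability"
begin

text \<open>Bregman divergence B_f(x,y) = f x - f y - <grad f(y), x - y>, written with the
  Frechet derivative of f at y (which is the linear map h |-> <grad f(y), h>).\<close>
definition bregman :: "('v::real_normed_vector \<Rightarrow> real) \<Rightarrow> 'v \<Rightarrow> 'v \<Rightarrow> real" where
  "bregman f x y = f x - f y - frechet_derivative f (at y) (x - y)"

definition ftrl_filtration ::
  "'a measure \<Rightarrow> (nat \<Rightarrow> 'a \<Rightarrow> real^'d) \<Rightarrow> (nat \<Rightarrow> 'a \<Rightarrow> real^'d) \<Rightarrow> nat \<Rightarrow> 'a measure" where
  "ftrl_filtration M x g t = sigma (space M)
     ({x s -` A \<inter> space M | s A. s \<in> {1..t} \<and> A \<in> sets borel} \<union>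
      {g s -` A \<inter> space M | s A. s \<in> {1..<t} \<and> A \<in> sets borel})"

definition ftrl_theta ::
  "(nat \<Rightarrow> 'a \<Rightarrow> real) \<Rightarrow> (nat \<Rightarrow> 'a \<Rightarrow> real^'d) \<Rightarrow> nat \<Rightarrow> 'a \<Rightarrow> real^'d" where
  "ftrl_theta eta g t \<omega> = - (\<Sum>s\<in>{1..t}. eta s \<omega> *\<^sub>R g s \<omega>)"

definition ftrl_H ::
  "(nat \<Rightarrow> 'a \<Rightarrow> real^'d \<Rightarrow> real) \<Rightarrow> (nat \<Rightarrow> 'a \<Rightarrow> real) \<Rightarrow> (nat \<Rightarrow> 'a \<Rightarrow> real^'d)
    \<Rightarrow> nat \<Rightarrow> 'a \<Rightarrow> real^'d \<Rightarrow> real" where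
  "ftrl_H phi eta g t \<omega> y = phi t \<omega> y - inner (ftrl_theta eta g (t - 1) \<omega>) y"

end

theory Submission
  imports Defs
begin

text \<open>Pathwise, the first-order optimality of \<open>x\<^sub>T\<^sub>+\<^sub>1\<close> for \<open>H\<^sub>T\<^sub>+\<^sub>1\<close> turns the Bregman divergence
  into the gap \<open>H\<^sub>T\<^sub>+\<^sub>1(u) - H\<^sub>T\<^sub>+\<^sub>1(x\<^sub>T\<^sub>+\<^sub>1)\<close>, and telescoping the stability condition bounds
  \<open>\<Sum>\<^sub>t \<langle>\<ell>\<^sub>t, x\<^sub>t\<rangle>\<close> by \<open>H\<^sub>T\<^sub>+\<^sub>1(x\<^sub>T\<^sub>+\<^sub>1) - \<phi>\<^sub>1(x\<^sub>1)\<close>; together this is the regret bound with \<open>g\<^sub>t\<close> in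
  place of \<open>\<nabla>F(x\<^sub>t)\<close>. Taking expectations, \<open>\<eta>\<^sub>t (x\<^sub>t - u)\<close> is \<open>\<F>\<^sub>t\<close>-measurable, so \<open>g\<^sub>t\<close> may be
  replaced by its conditional expectation \<open>\<nabla>F(x\<^sub>t)\<close>; this step is done on the truncations
  \<open>\<bar>\<eta>\<^sub>t (x\<^sub>t - u)\<bar> \<le> n\<close> and passed to the limit by dominated convergence.\<close>

lemma borel_measurable_vec_nth [measurable]: "(\<lambda>x::real^'d. x $ i) \<in> borel_measurable borel"
  by (intro borel_measurable_continuous_onI continuous_intros)

lemma tendsto_integral_truncation:
  fixes f :: "'a \<Rightarrow> 'b::real_normed_vector" and h :: "'a \<Rightarrow> real"
  assumes f [measurable]: "f \<in> borel_measurable M" and h: "integrable M h"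
  shows "(\<lambda>n. \<integral>\<omega>. indicator {\<omega>\<in>space M. norm (f \<omega>) \<le> real n} \<omega> * h \<omega> \<partial>M)
           \<longlonglongrightarrow> (\<integral>\<omega>. h \<omega> \<partial>M)"
proof (rule integral_dominated_convergence[where w = "\<lambda>\<omega>. norm (h \<omega>)"])
  have [measurable]: "h \<in> borel_measurable M" using h by auto
  show "(\<lambda>\<omega>. indicator {\<omega>\<in>space M. norm (f \<omega>) \<le> real n} \<omega> * h \<omega>) \<in> borel_measurable M" for n
    by measurable
  show "h \<in> borel_measurable M" "integrable M (\<lambda>\<omega>. norm (h \<omega>))" using h by auto
  show "AE \<omega> in M. norm (indicator {\<omega>\<in>space M. norm (f \<omega>) \<le> real n} \<omega> * h \<omega>) \<le> norm (h \<omega>)" for n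
    by (auto simp: indicator_def)
  show "AE \<omega> in M. (\<lambda>n. indicator {\<omega>\<in>space M. norm (f \<omega>) \<le> real n} \<omega> * h \<omega>) \<longlonglongrightarrow> h \<omega>"
  proof (rule AE_I2)
    fix \<omega> assume \<omega>: "\<omega> \<in> space M"
    obtain N :: nat where "norm (f \<omega>) \<le> real N" using real_arch_simple by blast
    then have "\<forall>n\<ge>N. indicator {\<omega>\<in>space M. norm (f \<omega>) \<le> real n} \<omega> * h \<omega> = h \<omega>"
      using \<omega> by (auto simp: indicator_def)
    then show "(\<lambda>n. indicator {\<omega>\<in>space M. norm (f \<omega>) \<le> real n} \<omega> * h \<omega>) \<longlonglongrightarrow> h \<omega>"
      by (intro tendsto_eventually) (auto simp: eventually_sequentially)
  qed
qed

lemma integral_inner_real_cond_exp_bounded: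
  fixes f g h :: "'a \<Rightarrow> real^'d"
  assumes "prob_space M" and sub: "subalgebra M N"
    and f [measurable]: "f \<in> borel_measurable N" and f_bound: "\<And>\<omega>. \<omega> \<in> space M \<Longrightarrow> norm (f \<omega>) \<le> B"
    and g [measurable]: "g \<in> borel_measurable M" and g_bound: "AE \<omega> in M. norm (g \<omega>) \<le> G"
    and cond_exp: "\<And>i. AE \<omega> in M. real_cond_exp M N (\<lambda>\<omega>. g \<omega> $ i) \<omega> = h \<omega> $ i"
    and fh [measurable]: "(\<lambda>\<omega>. inner (f \<omega>) (h \<omega>)) \<in> borel_measurable M"
  shows "(\<integral>\<omega>. inner (f \<omega>) (g \<omega>) \<partial>M) = (\<integral>\<omega>. inner (f \<omega>) (h \<omega>) \<partial>M)"
proof -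
  interpret prob_space M by fact
  interpret finite_measure_subalgebra M N by unfold_locales (rule sub)
  have [measurable]: "f \<in> borel_measurable M" using measurable_from_subalg[OF sub f] .
  have fg_int: "integrable M (\<lambda>\<omega>. f \<omega> $ i * g \<omega> $ i)" for i
  proof (rule integrable_const_bound[where B = "B * G"])
    show "AE \<omega> in M. norm (f \<omega> $ i * g \<omega> $ i) \<le> B * G"
      using AE_space g_bound
    proof eventually_elim
      case (elim \<omega>)
      then show ?case
        using f_bound[OF elim(1)] component_le_norm_cart[of "f \<omega>" i] component_le_norm_cart[of "g \<omega>" i]
        by (auto simp: abs_mult intro!: mult_mono)
    qed
  qed measurable
  have [measurable]: "(\<lambda>\<omega>. f \<omega> $ i) \<in> borel_measurable N" "(\<lambda>\<omega>. g \<omega> $ i) \<in> borel_measurable M" for i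
    by measurable
  note tower = real_cond_exp_intg[OF fg_int]
  have "(\<integral>\<omega>. inner (f \<omega>) (g \<omega>) \<partial>M) = (\<Sum>i\<in>UNIV. \<integral>\<omega>. f \<omega> $ i * g \<omega> $ i \<partial>M)"
    unfolding inner_vec_def inner_real_def by (rule Bochner_Integration.integral_sum) (use fg_int in auto)
  also have "\<dots> = (\<Sum>i\<in>UNIV. \<integral>\<omega>. f \<omega> $ i * real_cond_exp M N (\<lambda>\<omega>. g \<omega> $ i) \<omega> \<partial>M)"
    using tower by simp
  also have "\<dots> = (\<integral>\<omega>. (\<Sum>i\<in>UNIV. f \<omega> $ i * real_cond_exp M N (\<lambda>\<omega>. g \<omega> $ i) \<omega>) \<partial>M)"
    by (rule Bochner_Integration.integral_sum[symmetric]) (use tower in auto)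
  also have "\<dots> = (\<integral>\<omega>. inner (f \<omega>) (h \<omega>) \<partial>M)"
  proof (rule integral_cong_AE)
    have "AE \<omega> in M. \<forall>i. real_cond_exp M N (\<lambda>\<omega>. g \<omega> $ i) \<omega> = h \<omega> $ i"
      using cond_exp by (simp add: AE_all_countable)
    then show "AE \<omega> in M. (\<Sum>i\<in>UNIV. f \<omega> $ i * real_cond_exp M N (\<lambda>\<omega>. g \<omega> $ i) \<omega>)
        = inner (f \<omega>) (h \<omega>)"
      by eventually_elim (simp add: inner_vec_def inner_real_def)
  qed measurable
  finally show ?thesis .
qed

lemma integral_inner_real_cond_exp:
  fixes f g h :: "'a \<Rightarrow> real^'d"
  assumes M: "prob_space M" and sub: "subalgebra M N"
    and f [measurable]: "f \<in> borel_measurable N"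
    and g: "g \<in> borel_measurable M" and g_bound: "AE \<omega> in M. norm (g \<omega>) \<le> G"
    and cond_exp: "\<And>i. AE \<omega> in M. real_cond_exp M N (\<lambda>\<omega>. g \<omega> $ i) \<omega> = h \<omega> $ i"
    and fg: "integrable M (\<lambda>\<omega>. inner (f \<omega>) (g \<omega>))"
    and fh: "integrable M (\<lambda>\<omega>. inner (f \<omega>) (h \<omega>))"
  shows "(\<integral>\<omega>. inner (f \<omega>) (g \<omega>) \<partial>M) = (\<integral>\<omega>. inner (f \<omega>) (h \<omega>) \<partial>M)"
proof -
  have spN: "space N = space M" using sub by (simp add: subalgebra_def)
  define A where "A n = {\<omega>\<in>space M. norm (f \<omega>) \<le> real n}" for n :: nat
  have [measurable]: "A n \<in> sets N" for n
    unfolding A_def spN[symmetric] by measurable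
  have [measurable]: "(\<lambda>\<omega>. inner (f \<omega>) (h \<omega>)) \<in> borel_measurable M" using fh by auto
  have truncated: "(\<integral>\<omega>. indicator (A n) \<omega> * inner (f \<omega>) (g \<omega>) \<partial>M)
      = (\<integral>\<omega>. indicator (A n) \<omega> * inner (f \<omega>) (h \<omega>) \<partial>M)" for n
  proof -
    have meas: "(\<lambda>\<omega>. indicator (A n) \<omega> *\<^sub>R f \<omega>) \<in> borel_measurable N" by measurable
    have bound: "norm (indicator (A n) \<omega> *\<^sub>R f \<omega>) \<le> real n" if "\<omega> \<in> space M" for \<omega>
      by (auto simp: A_def indicator_def)
    have "A n \<in> sets M" using sub by (auto simp: subalgebra_def)
    then have "(\<lambda>\<omega>. inner (indicator (A n) \<omega> *\<^sub>R f \<omega>) (h \<omega>)) \<in> borel_measurable M" by simp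
    from integral_inner_real_cond_exp_bounded[OF M sub meas bound g g_bound cond_exp this]
    show ?thesis by simp
  qed
  have fM: "f \<in> borel_measurable M" using measurable_from_subalg[OF sub f] .
  show ?thesis
    using tendsto_integral_truncation[OF fM fg] tendsto_integral_truncation[OF fM fh] truncated
    unfolding A_def by (auto intro: LIMSEQ_unique)
qed

lemma subalgebra_sigma:
  assumes "A \<subseteq> sets M"
  shows "subalgebra M (sigma (space M) A)"
proof -
  have "A \<subseteq> Pow (space M)" using assms sets.sets_into_space by blast
  then show ?thesis
    using assms by (simp add: subalgebra_def sets.sigma_sets_subset)
qed

lemma subalgebra_ftrl_filtration:
  assumes "\<And>s. s \<ge> 1 \<Longrightarrow> x s \<in> borel_measurable M" and "\<And>s. s \<ge> 1 \<Longrightarrow> g s \<in> borel_measurable M"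
  shows "subalgebra M (ftrl_filtration M x g t)"
  unfolding ftrl_filtration_def
  using assms by (intro subalgebra_sigma) (auto intro: measurable_sets)

lemma measurable_ftrl_filtration_iterate:
  assumes "t \<ge> 1"
  shows "x t \<in> borel_measurable (ftrl_filtration M x g t)"
proof (rule measurableI)
  let ?gen = "{x s -` A \<inter> space M | s A. s \<in> {1..t} \<and> A \<in> sets borel} \<union>
      {g s -` A \<inter> space M | s A. s \<in> {1..<t} \<and> A \<in> sets borel}"
  have "?gen \<subseteq> Pow (space M)" by auto
  then have space: "space (ftrl_filtration M x g t) = space M"
    and sets: "sets (ftrl_filtration M x g t) = sigma_sets (space M) ?gen"
    by (simp_all add: ftrl_filtration_def)
  show "x t \<omega> \<in> space borel" for \<omega> by simp
  show "x t -` A \<inter> space (ftrl_filtration M x g t) \<in> sets (ftrl_filtration M x g t)"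
    if "A \<in> sets borel" for A
    unfolding space sets using that assms by (intro sigma_sets.Basic) auto
qed

lemma bregman_eq_at_tilted_minimizer:
  fixes p :: "'v::real_inner \<Rightarrow> real"
  assumes diff: "p differentiable (at y)" and min: "\<And>z. p y - inner \<theta> y \<le> p z - inner \<theta> z"
  shows "bregman p u y = (p u - inner \<theta> u) - (p y - inner \<theta> y)"
proof -
  let ?D = "frechet_derivative p (at y)"
  have "(p has_derivative ?D) (at y)" using diff by (simp add: frechet_derivative_works)
  then have "((\<lambda>z. p z - inner \<theta> z) has_derivative (\<lambda>h. ?D h - inner \<theta> h)) (at y)"
    by (intro has_derivative_diff has_derivative_inner_right has_derivative_ident)
  then have "(\<lambda>h. ?D h - inner \<theta> h) = (\<lambda>h. 0)"
    using min by (intro differential_zero_maxmin[OF UNIV_I open_UNIV]) auto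
  then have "?D h = inner \<theta> h" for h by (metis eq_iff_diff_eq_0)
  then show ?thesis by (simp add: bregman_def inner_diff_right)
qed

lemma bregman_ftrl_iterate:
  assumes "phi t \<omega> differentiable (at (x t \<omega>))"
    and "\<And>y. ftrl_H phi eta g t \<omega> (x t \<omega>) \<le> ftrl_H phi eta g t \<omega> y"
  shows "bregman (phi t \<omega>) u (x t \<omega>) = ftrl_H phi eta g t \<omega> u - ftrl_H phi eta g t \<omega> (x t \<omega>)"
  using bregman_eq_at_tilted_minimizer[OF assms(1), of "ftrl_theta eta g (t - 1) \<omega>"] assms(2)
  by (simp add: ftrl_H_def)

lemma ftrl_H_telescope:
  assumes "\<And>t. 1 \<le> t \<Longrightarrow> t \<le> T \<Longrightarrow>
      ftrl_H phi eta g t \<omega> (x t \<omega>) - ftrl_H phi eta g (t + 1) \<omega> (x (t + 1) \<omega>)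
        + inner (eta t \<omega> *\<^sub>R g t \<omega>) (x t \<omega>) \<le> 0"
  shows "(\<Sum>t\<in>{1..T}. inner (eta t \<omega> *\<^sub>R g t \<omega>) (x t \<omega>))
    \<le> ftrl_H phi eta g (T + 1) \<omega> (x (T + 1) \<omega>) - phi 1 \<omega> (x 1 \<omega>)"
  using assms
proof (induction T)
  case 0
  then show ?case by (simp add: ftrl_H_def ftrl_theta_def)
next
  case (Suc T)
  have "(\<Sum>t\<in>{1..T}. inner (eta t \<omega> *\<^sub>R g t \<omega>) (x t \<omega>))
      \<le> ftrl_H phi eta g (T + 1) \<omega> (x (T + 1) \<omega>) - phi 1 \<omega> (x 1 \<omega>)"
    using Suc by simp
  moreover have "ftrl_H phi eta g (T + 1) \<omega> (x (T + 1) \<omega>) - ftrl_H phi eta g (T + 2) \<omega> (x (T + 2) \<omega>)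
      + inner (eta (T + 1) \<omega> *\<^sub>R g (T + 1) \<omega>) (x (T + 1) \<omega>) \<le> 0"
    using Suc.prems[of "T + 1"] by simp
  ultimately show ?case by simp
qed

lemma ftrl_regret_pathwise:
  assumes m: "m \<le> phi 1 \<omega> (x 1 \<omega>)"
    and diff: "phi (T + 1) \<omega> differentiable (at (x (T + 1) \<omega>))"
    and argmin: "\<And>y. ftrl_H phi eta g (T + 1) \<omega> (x (T + 1) \<omega>) \<le> ftrl_H phi eta g (T + 1) \<omega> y"
    and stab: "\<And>t. 1 \<le> t \<Longrightarrow> t \<le> T \<Longrightarrow>
      ftrl_H phi eta g t \<omega> (x t \<omega>) - ftrl_H phi eta g (t + 1) \<omega> (x (t + 1) \<omega>)
        + inner (eta t \<omega> *\<^sub>R g t \<omega>) (x t \<omega>) \<le> 0"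
  shows "bregman (phi (T + 1) \<omega>) u (x (T + 1) \<omega>)
      + (\<Sum>t\<in>{1..T}. eta t \<omega> * inner (g t \<omega>) (x t \<omega> - u))
    \<le> phi (T + 1) \<omega> u - m"
proof -
  have "(\<Sum>t\<in>{1..T}. eta t \<omega> * inner (g t \<omega>) (x t \<omega> - u))
      = (\<Sum>t\<in>{1..T}. inner (eta t \<omega> *\<^sub>R g t \<omega>) (x t \<omega>)) + inner (ftrl_theta eta g T \<omega>) u"
    by (simp add: ftrl_theta_def inner_sum_left inner_diff_right right_diff_distrib sum_subtractf)
  moreover have "ftrl_H phi eta g (T + 1) \<omega> u = phi (T + 1) \<omega> u - inner (ftrl_theta eta g T \<omega>) u"
    by (simp add: ftrl_H_def)
  ultimately show ?thesis
    using bregman_ftrl_iterate[where phi = phi and x = x and t = "T + 1", OF diff argmin]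
      ftrl_H_telescope[where phi = phi and x = x and T = T, OF stab] m
    by simp
qed

lemma integral_add_sum_le_diff_const:
  fixes a c :: "'a \<Rightarrow> real" and b :: "'i \<Rightarrow> 'a \<Rightarrow> real"
  assumes "prob_space M" and "finite I"
    and a: "integrable M a" and b: "\<And>i. i \<in> I \<Longrightarrow> integrable M (b i)" and c: "integrable M c"
    and le: "\<And>\<omega>. \<omega> \<in> space M \<Longrightarrow> a \<omega> + (\<Sum>i\<in>I. b i \<omega>) \<le> c \<omega> - m"
  shows "(\<integral>\<omega>. a \<omega> \<partial>M) + (\<Sum>i\<in>I. \<integral>\<omega>. b i \<omega> \<partial>M) \<le> (\<integral>\<omega>. c \<omega> \<partial>M) - m"
proof -
  interpret prob_space M by fact
  have "(\<integral>\<omega>. a \<omega> + (\<Sum>i\<in>I. b i \<omega>) \<partial>M) \<le> (\<integral>\<omega>. c \<omega> - m \<partial>M)"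
    using a b c le by (intro integral_mono) auto
  then show ?thesis
    using a b c by (simp add: Bochner_Integration.integral_sum prob_space)
qed

lemma integral_ftrl_stochastic_gradient:
  assumes M: "prob_space M" and t: "t \<ge> 1"
    and x_meas: "\<And>s. s \<ge> 1 \<Longrightarrow> x s \<in> borel_measurable M"
    and g_meas: "\<And>s. s \<ge> 1 \<Longrightarrow> g s \<in> borel_measurable M"
    and g_unbiased: "\<And>i. AE \<omega> in M. real_cond_exp M (ftrl_filtration M x g t) (\<lambda>\<omega>. g t \<omega> $ i) \<omega>
                       = gradF (x t \<omega>) $ i"
    and g_bounded: "AE \<omega> in M. norm (g t \<omega>) \<le> G"
    and eta_meas [measurable]: "eta t \<in> borel_measurable (ftrl_filtration M x g t)"
    and int_g: "integrable M (\<lambda>\<omega>. eta t \<omega> * inner (g t \<omega>) (x t \<omega> - u))"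
    and int_gradF: "integrable M (\<lambda>\<omega>. eta t \<omega> * inner (gradF (x t \<omega>)) (x t \<omega> - u))"
  shows "(\<integral>\<omega>. eta t \<omega> * inner (g t \<omega>) (x t \<omega> - u) \<partial>M)
    = (\<integral>\<omega>. eta t \<omega> * inner (gradF (x t \<omega>)) (x t \<omega> - u) \<partial>M)"
proof -
  note [measurable] = measurable_ftrl_filtration_iterate[OF t]
  have "(\<lambda>\<omega>. eta t \<omega> *\<^sub>R (x t \<omega> - u)) \<in> borel_measurable (ftrl_filtration M x g t)"
    by measurable
  from integral_inner_real_cond_exp[OF M subalgebra_ftrl_filtration[OF x_meas g_meas] this
      g_meas[OF t] g_bounded g_unbiased]
  show ?thesis
    using int_g int_gradF by (simp add: inner_commute)
qed

theorem lemma2: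
  fixes M :: "'a measure"
    and F :: "real^'d \<Rightarrow> real" and gradF :: "real^'d \<Rightarrow> real^'d"
    and x g :: "nat \<Rightarrow> 'a \<Rightarrow> real^'d"
    and eta :: "nat \<Rightarrow> 'a \<Rightarrow> real"
    and phi :: "nat \<Rightarrow> 'a \<Rightarrow> real^'d \<Rightarrow> real"
    and phi1 :: "real^'d \<Rightarrow> real"
    and G :: real
  assumes M: "prob_space M"
    and F_grad: "\<And>y. (F has_derivative (\<lambda>h. inner (gradF y) h)) (at y)"
    and G_pos: "G > 0"
    and x_meas: "\<And>t. t \<ge> 1 \<Longrightarrow> x t \<in> borel_measurable M"
    and g_meas: "\<And>t. t \<ge> 1 \<Longrightarrow> g t \<in> borel_measurable M"
    and g_unbiased: "\<And>t i. t \<ge> 1 \<Longrightarrow>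
          AE \<omega> in M. real_cond_exp M (ftrl_filtration M x g t) (\<lambda>\<omega>. g t \<omega> $ i) \<omega>
                       = gradF (x t \<omega>) $ i"
    and g_bounded: "\<And>t. t \<ge> 1 \<Longrightarrow> AE \<omega> in M. norm (g t \<omega>) \<le> G"
    and eta_meas: "\<And>t. t \<ge> 1 \<Longrightarrow> eta t \<in> borel_measurable (ftrl_filtration M x g t)"
    and eta_nonneg: "\<And>t \<omega>. t \<ge> 1 \<Longrightarrow> \<omega> \<in> space M \<Longrightarrow> eta t \<omega> \<ge> 0"
    and phi_meas: "\<And>t y. t \<ge> 1 \<Longrightarrow>
          (\<lambda>\<omega>. phi t \<omega> y) \<in> borel_measurable (ftrl_filtration M x g t)"
    and phi1_det: "\<And>\<omega>. \<omega> \<in> space M \<Longrightarrow> phi 1 \<omega> = phi1"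
    and phi_convex: "\<And>t \<omega>. t \<ge> 1 \<Longrightarrow> \<omega> \<in> space M \<Longrightarrow> convex_on UNIV (phi t \<omega>)"
    and phi_diff: "\<And>t \<omega> y. t \<ge> 1 \<Longrightarrow> \<omega> \<in> space M \<Longrightarrow> phi t \<omega> differentiable (at y)"
    and x_argmin: "\<And>t \<omega> y. t \<ge> 1 \<Longrightarrow> \<omega> \<in> space M \<Longrightarrow>
          ftrl_H phi eta g t \<omega> (x t \<omega>) \<le> ftrl_H phi eta g t \<omega> y"
    and phi1_min: "\<exists>z. \<forall>y. phi1 z \<le> phi1 y"
    and int_breg: "\<And>t u. t \<ge> 1 \<Longrightarrow> integrable M (\<lambda>\<omega>. bregman (phi t \<omega>) u (x t \<omega>))"
    and int_phi: "\<And>t u. t \<ge> 1 \<Longrightarrow> integrable M (\<lambda>\<omega>. phi t \<omega> u)"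
    and int_gradF: "\<And>t u. t \<ge> 1 \<Longrightarrow>
          integrable M (\<lambda>\<omega>. eta t \<omega> * inner (gradF (x t \<omega>)) (x t \<omega> - u))"
    and int_g: "\<And>t u. t \<ge> 1 \<Longrightarrow>
          integrable M (\<lambda>\<omega>. eta t \<omega> * inner (g t \<omega>) (x t \<omega> - u))"
    and stab: "\<And>t \<omega>. t \<ge> 1 \<Longrightarrow> \<omega> \<in> space M \<Longrightarrow>
          ftrl_H phi eta g t \<omega> (x t \<omega>) - ftrl_H phi eta g (t + 1) \<omega> (x (t + 1) \<omega>)
            + inner (eta t \<omega> *\<^sub>R g t \<omega>) (x t \<omega>) \<le> 0"
  shows "\<forall>(T::nat) u.
     (integral\<^sup>L M (\<lambda>\<omega>. bregman (phi (T + 1) \<omega>) u (x (T + 1) \<omega>))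
       + (\<Sum>t\<in>{1..T}. integral\<^sup>L M (\<lambda>\<omega>. eta t \<omega> * inner (gradF (x t \<omega>)) (x t \<omega> - u)))
       \<le> integral\<^sup>L M (\<lambda>\<omega>. phi (T + 1) \<omega> u) - (INF y. phi1 y))
   \<and> (\<Sum>t\<in>{1..T}. integral\<^sup>L M (\<lambda>\<omega>. eta t \<omega> * inner (gradF (x t \<omega>)) (x t \<omega> - u)))
       \<le> integral\<^sup>L M (\<lambda>\<omega>. phi (T + 1) \<omega> u) - (INF y. phi1 y)
   \<and> (\<forall>xs. (\<forall>y. inner (gradF y) (y - xs) \<ge> 0) \<longrightarrow>
       integral\<^sup>L M (\<lambda>\<omega>. bregman (phi (T + 1) \<omega>) xs (x (T + 1) \<omega>))
         \<le> integral\<^sup>L M (\<lambda>\<omega>. phi (T + 1) \<omega> xs) - (INF y. phi1 y))"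
proof -
  let ?m = "INF y. phi1 y"
  have "bdd_below (range phi1)" using phi1_min by (auto simp: bdd_below_def)
  then have min_le: "?m \<le> phi 1 \<omega> (x 1 \<omega>)" if "\<omega> \<in> space M" for \<omega>
    using phi1_det[OF that] by (simp add: cINF_lower)
  have unbiased: "(\<integral>\<omega>. eta t \<omega> * inner (g t \<omega>) (x t \<omega> - v) \<partial>M)
      = (\<integral>\<omega>. eta t \<omega> * inner (gradF (x t \<omega>)) (x t \<omega> - v) \<partial>M)" if "t \<ge> 1" for t v
    by (rule integral_ftrl_stochastic_gradient[where x = x and g = g and eta = eta and gradF = gradF,
          OF M that x_meas g_meas g_unbiased[OF that]
          g_bounded[OF that] eta_meas[OF that] int_g[OF that] int_gradF[OF that]])
  have regret: "(\<integral>\<omega>. bregman (phi (T + 1) \<omega>) v (x (T + 1) \<omega>) \<partial>M)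
      + (\<Sum>t\<in>{1..T}. \<integral>\<omega>. eta t \<omega> * inner (gradF (x t \<omega>)) (x t \<omega> - v) \<partial>M)
    \<le> (\<integral>\<omega>. phi (T + 1) \<omega> v \<partial>M) - ?m" for T v
  proof -
    have "(\<integral>\<omega>. bregman (phi (T + 1) \<omega>) v (x (T + 1) \<omega>) \<partial>M)
        + (\<Sum>t\<in>{1..T}. \<integral>\<omega>. eta t \<omega> * inner (g t \<omega>) (x t \<omega> - v) \<partial>M)
      \<le> (\<integral>\<omega>. phi (T + 1) \<omega> v \<partial>M) - ?m"
    proof (rule integral_add_sum_le_diff_const[OF M], goal_cases)
      case (5 \<omega>)
      show ?case
        by (rule ftrl_regret_pathwise) (use 5 min_le phi_diff x_argmin stab in auto)
    qed (auto intro: int_breg int_g int_phi)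
    then show ?thesis using unbiased by simp
  qed
  have bregman_nonneg: "0 \<le> (\<integral>\<omega>. bregman (phi (T + 1) \<omega>) v (x (T + 1) \<omega>) \<partial>M)" for T v
    using bregman_ftrl_iterate[of phi "T + 1" _ x eta g v] phi_diff x_argmin
    by (intro integral_nonneg_AE AE_I2) simp
  have gradient_nonneg: "0 \<le> (\<Sum>t\<in>{1..T}. \<integral>\<omega>. eta t \<omega> * inner (gradF (x t \<omega>)) (x t \<omega> - v) \<partial>M)"
    if "\<forall>y. inner (gradF y) (y - v) \<ge> 0" for T v
    using that eta_nonneg by (intro sum_nonneg integral_nonneg_AE AE_I2 mult_nonneg_nonneg) auto
  show ?thesis
    apply (intro allI conjI impI)
    subgoal for T u using regret[of T u] .
    subgoal for T u using regret[of T u] bregman_nonneg[of T u] by linarith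
    subgoal premises monotone for T u xs using regret[of T xs] gradient_nonneg[OF monotone, of T] by linarith
    done
qed

end
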